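(* Let $n\ge2$. There is no homeomorphism $\Phi:Q\to(\mathcal K_0^n,d_{AW})$ such that for all $x,y\in Q$, $x\preceq y$ if and only if $\Phi(x)\subseteq\Phi(y)$.
   Context: $Q=\prod_{i=1}^\infty[-1,1]$ with the product topology and the coordinatewise partial order: $x\preceq y$ iff $x_i\le y_i$ for all $i$. $\mathcal K_0^n$: closed convex subsets of $\mathbb R^n$ containing $0$, with the Attouch–Wets metric $d_{AW}(A,K)=\sup_{j\in\mathbb N}\min\{\frac1j,\sup_{\|x\|<j}|d(x,A)-d(x,K)|\}$, $d(x,A)=\inf_{a\in A}\|x-a\|$. *)

theory Defs
  imports "HOL-Analysis.Analysis"
begin

text \<open>The Hilbert cube Q = product of [-1,1] over the naturals, as a subset of
  nat => real (whose standard topology is the product topology).\<close>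
definition hilbert_cube :: "(nat \<Rightarrow> real) set" where
  "hilbert_cube = {x. \<forall>i. x i \<in> {-1..1}}"

definition coord_le :: "(nat \<Rightarrow> real) \<Rightarrow> (nat \<Rightarrow> real) \<Rightarrow> bool" where
  "coord_le x y \<longleftrightarrow> (\<forall>i. x i \<le> y i)"

definition K0 :: "('a::euclidean_space) set set" where
  "K0 = {K. closed K \<and> convex K \<and> 0 \<in> K}"

definition d_AW :: "('a::euclidean_space) set \<Rightarrow> 'a set \<Rightarrow> real" where
  "d_AW A K = (SUP j\<in>{1::nat..}. min (1 / real j)
       (SUP x\<in>{x. norm x < real j}. \<bar>infdist x A - infdist x K\<bar>))"

definition AW_topology :: "('a::euclidean_space) set topology" where
  "AW_topology = Metric_space.mtopology K0 d_AW"

end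

theory Submission
  imports Defs
begin

text \<open>Coordinatewise \<open>min\<close> and \<open>max\<close> make \<open>Q\<close> a distributive lattice, and an order
  isomorphism transports distributivity to \<open>K\<^sub>0\<^sup>n\<close> ordered by inclusion. But there joins are closed
  convex hulls and meets are intersections, and three distinct lines through the origin in one
  plane violate distributivity: the line \<open>\<real>(e\<^sub>i + e\<^sub>j)\<close> lies in the join of \<open>\<real>e\<^sub>i\<close> and \<open>\<real>e\<^sub>j\<close> while
  meeting each of them only in \<open>{0}\<close>. The topology enters only to make \<open>\<Phi>\<close> onto \<open>K\<^sub>0\<^sup>n\<close>, which
  requires \<open>d\<^sub>A\<^sub>W\<close> to be a metric on \<open>K\<^sub>0\<^sup>n\<close>.\<close>

definition AW_ball_dist :: "('a::euclidean_space) set \<Rightarrow> 'a set \<Rightarrow> nat \<Rightarrow> real" where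
  "AW_ball_dist A K j = (SUP x\<in>{x. norm x < real j}. \<bar>infdist x A - infdist x K\<bar>)"

lemma d_AW_eq_SUP_AW_ball_dist:
  "d_AW A K = (SUP j\<in>{1::nat..}. min (1 / real j) (AW_ball_dist A K j))"
  by (simp add: d_AW_def AW_ball_dist_def)

lemma infdist_diff_le_infdist_diff_0:
  "\<bar>infdist x A - infdist x K\<bar> \<le> \<bar>infdist 0 A - infdist 0 K\<bar> + 2 * norm x"
  using infdist_triangle_abs[of x A 0] infdist_triangle_abs[of x K 0] by (simp add: dist_norm)

lemma bdd_above_infdist_diff_ball:
  "bdd_above ((\<lambda>x. \<bar>infdist x A - infdist x K\<bar>) ` {x. norm x < real j})"
proof (rule bdd_aboveI2)
  fix x :: 'a assume "x \<in> {x. norm x < real j}"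
  then show "\<bar>infdist x A - infdist x K\<bar> \<le> \<bar>infdist 0 A - infdist 0 K\<bar> + 2 * real j"
    using infdist_diff_le_infdist_diff_0[of x A K] by simp
qed

lemma ball_nat_nonempty: "j \<ge> 1 \<Longrightarrow> {x::'a::real_normed_vector. norm x < real j} \<noteq> {}"
  by (auto intro: exI[of _ 0])

lemma infdist_diff_le_AW_ball_dist:
  "norm x < real j \<Longrightarrow> \<bar>infdist x A - infdist x K\<bar> \<le> AW_ball_dist A K j"
  unfolding AW_ball_dist_def by (rule cSUP_upper[OF _ bdd_above_infdist_diff_ball]) simp

lemma AW_ball_dist_nonneg: "j \<ge> 1 \<Longrightarrow> 0 \<le> AW_ball_dist A K j"
  using infdist_diff_le_AW_ball_dist[of 0 j A K] by simp

lemma AW_ball_dist_commute: "AW_ball_dist A K j = AW_ball_dist K A j"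
  unfolding AW_ball_dist_def by (simp add: abs_minus_commute)

lemma AW_ball_dist_self: "j \<ge> 1 \<Longrightarrow> AW_ball_dist A A j = 0"
  unfolding AW_ball_dist_def by (simp add: cSUP_const[OF ball_nat_nonempty])

lemma AW_ball_dist_triangle:
  assumes "j \<ge> 1"
  shows "AW_ball_dist A C j \<le> AW_ball_dist A B j + AW_ball_dist B C j"
  unfolding AW_ball_dist_def[of A C]
proof (rule cSUP_least)
  show "{x::'a. norm x < real j} \<noteq> {}"
    using assms by (rule ball_nat_nonempty)
  fix x :: 'a assume "x \<in> {x. norm x < real j}"
  then have "\<bar>infdist x A - infdist x B\<bar> \<le> AW_ball_dist A B j"
    and "\<bar>infdist x B - infdist x C\<bar> \<le> AW_ball_dist B C j"
    by (auto intro: infdist_diff_le_AW_ball_dist)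
  then show "\<bar>infdist x A - infdist x C\<bar> \<le> AW_ball_dist A B j + AW_ball_dist B C j"
    by linarith
qed

lemma min_AW_ball_dist_le_d_AW: "j \<ge> 1 \<Longrightarrow> min (1 / real j) (AW_ball_dist A K j) \<le> d_AW A K"
  unfolding d_AW_eq_SUP_AW_ball_dist
  by (rule cSUP_upper) (auto intro: bdd_aboveI2[of _ _ 1] simp: min_le_iff_disj)

lemma d_AW_nonneg: "0 \<le> d_AW A K"
  using min_AW_ball_dist_le_d_AW[of 1 A K] AW_ball_dist_nonneg[of 1 A K] by simp

lemma d_AW_self: "d_AW A A = 0"
proof -
  have "d_AW A A = (SUP j\<in>{1::nat..}. 0)"
    unfolding d_AW_eq_SUP_AW_ball_dist by (intro SUP_cong) (simp_all add: AW_ball_dist_self)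
  then show ?thesis
    by simp
qed

lemma infdist_eq_if_d_AW_eq_0:
  assumes "d_AW A K = 0"
  shows "infdist x A = infdist x K"
proof -
  obtain k :: nat where "norm x < real k"
    using reals_Archimedean2 by blast
  then have j: "norm x < real (Suc k)" "Suc k \<ge> 1"
    by simp_all
  have "min (1 / real (Suc k)) (AW_ball_dist A K (Suc k)) \<le> 0"
    using min_AW_ball_dist_le_d_AW[OF j(2), of A K] assms by simp
  then have "AW_ball_dist A K (Suc k) \<le> 0"
    by (simp add: min_le_iff_disj)
  then show ?thesis
    using infdist_diff_le_AW_ball_dist[OF j(1), of A K] by simp
qed

lemma min_le_add_min:
  fixes c x y z :: real
  shows "0 \<le> c \<Longrightarrow> 0 \<le> y \<Longrightarrow> 0 \<le> z \<Longrightarrow> x \<le> y + z \<Longrightarrow> min c x \<le> min c y + min c z"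
  by (simp add: min_def)

lemma d_AW_triangle: "d_AW A C \<le> d_AW A B + d_AW B C"
  unfolding d_AW_eq_SUP_AW_ball_dist[of A C]
proof (rule cSUP_least)
  fix j :: nat assume "j \<in> {1..}"
  then have j: "j \<ge> 1" by simp
  have "min (1 / real j) (AW_ball_dist A C j)
      \<le> min (1 / real j) (AW_ball_dist A B j) + min (1 / real j) (AW_ball_dist B C j)"
    using AW_ball_dist_triangle[OF j, of A C B]
      AW_ball_dist_nonneg[OF j, of A B] AW_ball_dist_nonneg[OF j, of B C]
    by (intro min_le_add_min) simp_all
  also have "\<dots> \<le> d_AW A B + d_AW B C"
    using min_AW_ball_dist_le_d_AW[OF j] by (intro add_mono)
  finally show "min (1 / real j) (AW_ball_dist A C j) \<le> d_AW A B + d_AW B C" .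
qed simp

lemma Metric_space_d_AW: "Metric_space (K0 :: ('a::euclidean_space) set set) d_AW"
proof
  fix A K :: "'a set"
  show "0 \<le> d_AW A K"
    by (rule d_AW_nonneg)
  show "d_AW A K = d_AW K A"
    unfolding d_AW_eq_SUP_AW_ball_dist AW_ball_dist_commute[of A K] ..
  show "d_AW A C \<le> d_AW A K + d_AW K C" for C
    by (rule d_AW_triangle)
  assume "A \<in> K0" "K \<in> K0"
  then have "closed A" "A \<noteq> {}" "closed K" "K \<noteq> {}"
    by (auto simp: K0_def)
  then have "x \<in> A \<longleftrightarrow> x \<in> K" if "d_AW A K = 0" for x
    using infdist_eq_if_d_AW_eq_0[OF that, of x] in_closed_iff_infdist_zero[of _ x] by simp
  then have "A = K" if "d_AW A K = 0"
    using that by blast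
  then show "d_AW A K = 0 \<longleftrightarrow> A = K"
    using d_AW_self by blast
qed

lemma topspace_AW_topology: "topspace (AW_topology :: ('a::euclidean_space) set topology) = K0"
  unfolding AW_topology_def by (rule Metric_space.topspace_mtopology[OF Metric_space_d_AW])

lemma span_in_K0: "span S \<in> K0"
  by (simp add: K0_def closed_span subspace_imp_convex span_zero)

lemma span_add_subset_convex:
  assumes "convex K" "span {u} \<subseteq> K" "span {v} \<subseteq> K"
  shows "span {u + v} \<subseteq> K"
proof
  fix x assume "x \<in> span {u + v}"
  then obtain t where x: "x = t *\<^sub>R (u + v)"
    by (auto simp: span_singleton)
  have "(2 * t) *\<^sub>R u \<in> K" "(2 * t) *\<^sub>R v \<in> K"
    using assms(2,3) by (auto simp: span_singleton)
  from convexD[OF assms(1) this, of "1/2" "1/2"] show "x \<in> K"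
    by (simp add: x scaleR_add_right)
qed

lemma span_axis_add_inter_span_axis:
  fixes i j :: "'n::finite"
  assumes "i \<noteq> j"
  shows "span {axis i 1 + axis j 1} \<inter> span {axis j (1::real)} = {0}"
proof -
  have "t = 0 \<and> s = 0" if "t *\<^sub>R (axis i 1 + axis j 1) = s *\<^sub>R axis j (1::real)" for t s
    using arg_cong[OF that, of "\<lambda>x. x $ i"] arg_cong[OF that, of "\<lambda>x. x $ j"] assms
    by (simp add: axis_def)
  then show ?thesis
    by (auto simp: span_singleton)
qed

lemma K0_not_distributive:
  assumes "CARD('n::finite) \<ge> 2"
  obtains A B C :: "(real ^ 'n) set"
  where "A \<in> K0" "B \<in> K0" "C \<in> K0"
    and "\<And>K. K \<in> K0 \<Longrightarrow> B \<subseteq> K \<Longrightarrow> C \<subseteq> K \<Longrightarrow> A \<subseteq> K"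
    and "A \<inter> B = {0}" "A \<inter> C = {0}" "A \<noteq> {0}"
proof -
  obtain i j :: 'n where ij: "i \<noteq> j"
    using assms card_le_Suc0_iff_eq[of "UNIV :: 'n set"] by force
  let ?v = "axis i 1 + axis j (1::real)"
  have "?v $ i = 1"
    using ij by (simp add: axis_def)
  then have "?v \<noteq> 0"
    by force
  then have "span {?v} \<noteq> {0}"
    using span_base[of ?v "{?v}"] by force
  moreover have "span {?v} \<inter> span {axis i 1} = {0}"
    using span_axis_add_inter_span_axis[of j i] ij by (simp add: add.commute)
  moreover have "span {?v} \<subseteq> K"
    if "K \<in> K0" "span {axis i 1} \<subseteq> K" "span {axis j 1} \<subseteq> K" for K
    using that by (intro span_add_subset_convex) (auto simp: K0_def)
  ultimately show thesis
    using that[of "span {?v}" "span {axis i 1}" "span {axis j 1}"]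
      span_axis_add_inter_span_axis[OF ij] span_in_K0 by blast
qed

lemma coord_le_iff_le: "coord_le x y \<longleftrightarrow> x \<le> y"
  by (simp add: coord_le_def le_fun_def)

lemma hilbert_cube_sup_closed: "x \<in> hilbert_cube \<Longrightarrow> y \<in> hilbert_cube \<Longrightarrow> sup x y \<in> hilbert_cube"
  by (auto simp: hilbert_cube_def sup_max le_max_iff_disj)

lemma hilbert_cube_inf_closed: "x \<in> hilbert_cube \<Longrightarrow> y \<in> hilbert_cube \<Longrightarrow> inf x y \<in> hilbert_cube"
  by (auto simp: hilbert_cube_def inf_min min_le_iff_disj)

text \<open>The image need not be a lattice, so the join of \<open>B\<close> and \<open>C\<close> and the meets with \<open>A\<close> are
  expressed through upper and lower bounds inside the image.\<close>
lemma order_embedding_image_distributive: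
  fixes \<Phi> :: "'a::distrib_lattice \<Rightarrow> 'b::order"
  assumes sup_closed: "\<And>x y. x \<in> S \<Longrightarrow> y \<in> S \<Longrightarrow> sup x y \<in> S"
    and inf_closed: "\<And>x y. x \<in> S \<Longrightarrow> y \<in> S \<Longrightarrow> inf x y \<in> S"
    and mono_iff: "\<And>x y. x \<in> S \<Longrightarrow> y \<in> S \<Longrightarrow> x \<le> y \<longleftrightarrow> \<Phi> x \<le> \<Phi> y"
    and in_image: "A \<in> \<Phi> ` S" "B \<in> \<Phi> ` S" "C \<in> \<Phi> ` S" "Z \<in> \<Phi> ` S"
    and below_join: "\<And>K. K \<in> \<Phi> ` S \<Longrightarrow> B \<le> K \<Longrightarrow> C \<le> K \<Longrightarrow> A \<le> K"
    and meet_B: "\<And>K. K \<in> \<Phi> ` S \<Longrightarrow> K \<le> A \<Longrightarrow> K \<le> B \<Longrightarrow> K \<le> Z"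
    and meet_C: "\<And>K. K \<in> \<Phi> ` S \<Longrightarrow> K \<le> A \<Longrightarrow> K \<le> C \<Longrightarrow> K \<le> Z"
  shows "A \<le> Z"
proof -
  obtain a b c z where abcz: "a \<in> S" "b \<in> S" "c \<in> S" "z \<in> S"
    and "A = \<Phi> a" "B = \<Phi> b" "C = \<Phi> c" "Z = \<Phi> z"
    using in_image by (elim imageE)
  have mono: "\<Phi> x \<le> \<Phi> y" if "x \<in> S" "y \<in> S" "x \<le> y" for x y
    using mono_iff that by blast
  have "a \<le> sup b c"
    using below_join[of "\<Phi> (sup b c)"] mono[of b "sup b c"] mono[of c "sup b c"]
      mono_iff[of a "sup b c"] sup_closed abcz \<open>A = \<Phi> a\<close> \<open>B = \<Phi> b\<close> \<open>C = \<Phi> c\<close> by simp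
  moreover have "inf a b \<le> z"
    using meet_B[of "\<Phi> (inf a b)"] mono[of "inf a b" a] mono[of "inf a b" b]
      mono_iff[of "inf a b" z] inf_closed abcz \<open>A = \<Phi> a\<close> \<open>B = \<Phi> b\<close> \<open>Z = \<Phi> z\<close> by simp
  moreover have "inf a c \<le> z"
    using meet_C[of "\<Phi> (inf a c)"] mono[of "inf a c" a] mono[of "inf a c" c]
      mono_iff[of "inf a c" z] inf_closed abcz \<open>A = \<Phi> a\<close> \<open>C = \<Phi> c\<close> \<open>Z = \<Phi> z\<close> by simp
  ultimately have "a \<le> z"
    by (metis inf.absorb1 inf_sup_distrib1 sup.boundedI)
  then show ?thesis
    using mono abcz \<open>A = \<Phi> a\<close> \<open>Z = \<Phi> z\<close> by blast
qed

theorem mainTheorem20: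
  assumes "CARD('n::finite) \<ge> 2"
  shows "\<not> (\<exists>\<Phi> :: (nat \<Rightarrow> real) \<Rightarrow> (real ^ 'n) set.
            homeomorphic_map (top_of_set hilbert_cube) AW_topology \<Phi> \<and>
            (\<forall>x\<in>hilbert_cube. \<forall>y\<in>hilbert_cube. coord_le x y \<longleftrightarrow> \<Phi> x \<subseteq> \<Phi> y))"
proof
  assume "\<exists>\<Phi> :: (nat \<Rightarrow> real) \<Rightarrow> (real ^ 'n) set.
            homeomorphic_map (top_of_set hilbert_cube) AW_topology \<Phi> \<and>
            (\<forall>x\<in>hilbert_cube. \<forall>y\<in>hilbert_cube. coord_le x y \<longleftrightarrow> \<Phi> x \<subseteq> \<Phi> y)"
  then obtain \<Phi> :: "(nat \<Rightarrow> real) \<Rightarrow> (real ^ 'n) set"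
    where homeo: "homeomorphic_map (top_of_set hilbert_cube) AW_topology \<Phi>"
      and mono_iff: "\<And>x y. x \<in> hilbert_cube \<Longrightarrow> y \<in> hilbert_cube \<Longrightarrow> x \<le> y \<longleftrightarrow> \<Phi> x \<subseteq> \<Phi> y"
    by (auto simp: coord_le_iff_le)
  have onto: "\<Phi> ` hilbert_cube = K0"
    using homeomorphic_imp_surjective_map[OF homeo] topspace_AW_topology by simp
  obtain A B C :: "(real ^ 'n) set" where ABC: "A \<in> K0" "B \<in> K0" "C \<in> K0"
    and below_join: "\<And>K. K \<in> K0 \<Longrightarrow> B \<subseteq> K \<Longrightarrow> C \<subseteq> K \<Longrightarrow> A \<subseteq> K"
    and meets: "A \<inter> B = {0}" "A \<inter> C = {0}" "A \<noteq> {0}"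
    by (rule K0_not_distributive[OF assms]) (rule that)
  have "{0} \<in> K0"
    using span_in_K0[of "{}"] by simp
  have "A \<subseteq> {0}"
  proof (rule order_embedding_image_distributive[where S = hilbert_cube and \<Phi> = \<Phi>], unfold onto)
    show "K \<subseteq> {0}" if "K \<subseteq> A" "K \<subseteq> B" for K
      using that meets(1) by blast
    show "K \<subseteq> {0}" if "K \<subseteq> A" "K \<subseteq> C" for K
      using that meets(2) by blast
  qed (fact hilbert_cube_sup_closed hilbert_cube_inf_closed mono_iff ABC below_join \<open>{0} \<in> K0\<close>)+
  then show False
    using meets by auto
qed

end
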